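(* Let $A_1,A_2$ be algebras and $k:A_1\to A_2$ an algebra epimorphism (surjective unital algebra homomorphism). Then $\dim(\mathfrak{u}_{A_2})\le\dim(\mathfrak{u}_{A_1})$.
   Context: An "algebra" is a real finite-dimensional unital associative algebra with underlying vector space $\mathbb{R}^n$, standard basis, elements column vectors $s=(x_1,\dots,x_n)^T$, $\mathbf{d}s=(dx_1,\dots,dx_n)^T$. An uncurling metric of $A$ is a real symmetric $n\times n$ matrix $L$ with $d\big((s^{-1})^TL\,\mathbf{d}s\big)=0$ on an open ball centered at $\mathbf{1}_A$ consisting only of units; the anti-rotor $\mathfrak{u}_A$ is the real vector space of all uncurling metrics of $A$. *)

theory Defs
  imports "HOL-Analysis.Analysis"
begin

definition is_algebra :: "(real^'n \<Rightarrow> real^'n \<Rightarrow> real^'n) \<Rightarrow> real^'n \<Rightarrow> bool" where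
  "is_algebra mul one \<longleftrightarrow> bilinear mul \<and>
     (\<forall>a b c. mul (mul a b) c = mul a (mul b c)) \<and>
     (\<forall>a. mul one a = a \<and> mul a one = a)"

definition alg_units :: "(real^'n \<Rightarrow> real^'n \<Rightarrow> real^'n) \<Rightarrow> real^'n \<Rightarrow> (real^'n) set" where
  "alg_units mul one = {s. \<exists>t. mul s t = one \<and> mul t s = one}"

definition alg_inv :: "(real^'n \<Rightarrow> real^'n \<Rightarrow> real^'n) \<Rightarrow> real^'n \<Rightarrow> real^'n \<Rightarrow> real^'n" where
  "alg_inv mul one s = (THE t. mul s t = one \<and> mul t s = one)"

definition alg_hom :: "(real^'n \<Rightarrow> real^'n \<Rightarrow> real^'n) \<Rightarrow> real^'n \<Rightarrow>
    (real^'m \<Rightarrow> real^'m \<Rightarrow> real^'m) \<Rightarrow> real^'m \<Rightarrow> (real^'n \<Rightarrow> real^'m) \<Rightarrow> bool" where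
  "alg_hom mul1 one1 mul2 one2 k \<longleftrightarrow> linear k \<and>
     (\<forall>a b. k (mul1 a b) = mul2 (k a) (k b)) \<and> k one1 = one2"

text \<open>The 1-form (s^{-1})^T L ds has coefficient vector f(s) = s^{-1} v* L;
  it is closed at s iff f is differentiable at s and d f_j/d x_k = d f_k / d x_j.\<close>
definition uncurling_metric :: "(real^'n \<Rightarrow> real^'n \<Rightarrow> real^'n) \<Rightarrow> real^'n \<Rightarrow> real^'n^'n \<Rightarrow> bool" where
  "uncurling_metric mul one L \<longleftrightarrow> transpose L = L \<and>
     (\<exists>r>0. ball one r \<subseteq> alg_units mul one \<and>
        (\<forall>s\<in>ball one r. \<exists>f'.
           ((\<lambda>x. alg_inv mul one x v* L) has_derivative f') (at s) \<and>
           (\<forall>j k. f' (axis k 1) $ j = f' (axis j 1) $ k)))"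

definition anti_rotor :: "(real^'n \<Rightarrow> real^'n \<Rightarrow> real^'n) \<Rightarrow> real^'n \<Rightarrow> (real^'n^'n) set" where
  "anti_rotor mul one = {L. uncurling_metric mul one L}"

end

theory Submission
  imports Defs
begin

text \<open>Pulling metrics back along the surjection \<open>k\<close>, \<open>L \<mapsto> K\<^sup>T L K\<close> with \<open>K\<close> the
  matrix of \<open>k\<close>, is an injective linear map. Since \<open>k\<close> is multiplicative it maps inverses to
  inverses, so the coefficient vector of the form \<open>(s\<^sup>-\<^sup>1)\<^sup>T K\<^sup>T L K ds\<close> is
  \<open>f (k s) K\<close>, where \<open>f\<close> is that of \<open>(s\<^sup>-\<^sup>1)\<^sup>T L ds\<close>. Its Jacobian at \<open>s\<close> is
  \<open>K\<^sup>T J K\<close> with \<open>J\<close> the symmetric Jacobian of \<open>f\<close> at \<open>k s\<close>, hence again symmetric: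
  the pull-back of an uncurling metric is uncurling, and the anti-rotor of \<open>A\<^sub>2\<close> embeds
  linearly into that of \<open>A\<^sub>1\<close>.\<close>

lemma is_algebra_bounded_bilinear:
  "is_algebra mul one \<Longrightarrow> bounded_bilinear mul"
  unfolding is_algebra_def by (simp add: bilinear_conv_bounded_bilinear)

lemma alg_units_if_inj_mul:
  assumes A: "is_algebra mul one" and inj: "inj (mul s)"
  shows "s \<in> alg_units mul one"
proof -
  have assoc: "\<And>a b c. mul (mul a b) c = mul a (mul b c)"
    and unit: "\<And>a. mul one a = a" "\<And>a. mul a one = a"
    using A unfolding is_algebra_def by auto
  have "linear (mul s)"
    using bounded_bilinear.bounded_linear_right[OF is_algebra_bounded_bilinear[OF A]]
    by (rule bounded_linear.linear)
  then have "surj (mul s)"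
    using inj by (simp add: linear_injective_imp_surjective)
  then obtain t where t: "mul s t = one" by (metis surjD)
  have "mul s (mul t s) = mul s one" using t assoc unit by metis
  then have "mul t s = one" using inj by (simp add: inj_eq)
  with t show ?thesis unfolding alg_units_def by blast
qed

lemma alg_units_nhd:
  assumes A: "is_algebra mul one"
  shows "\<exists>r>0. ball one r \<subseteq> alg_units mul one"
proof -
  have bb: "bounded_bilinear mul" using A by (rule is_algebra_bounded_bilinear)
  have unit: "\<And>a. mul one a = a" using A unfolding is_algebra_def by auto
  obtain K where K: "K > 0" "\<And>a b. norm (mul a b) \<le> norm a * norm b * K"
    using bounded_bilinear.pos_bounded[OF bb] by blast
  show ?thesis
  proof (intro exI conjI subsetI)
    show "1 / K > 0" using K by simp
    fix s assume "s \<in> ball one (1 / K)"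
    then have small: "norm (s - one) * K < 1" using K
      by (simp add: dist_norm norm_minus_commute field_simps)
    have "x = 0" if "mul s x = 0" for x
    proof -
      \<comment> \<open>\<open>x = - (s - 1) x\<close>, and multiplication by \<open>s - 1\<close> is a contraction\<close>
      have "mul (s - one) x = - x"
        using that unit by (simp add: bounded_bilinear.diff_left[OF bb])
      then have "norm x \<le> norm x * (norm (s - one) * K)"
        using K(2)[of "s - one" x] by (simp add: algebra_simps)
      with small have "norm x \<le> 0"
        by (smt (verit) mult_left_mono norm_ge_zero mult_le_cancel_left1)
      then show "x = 0" by simp
    qed
    then have "inj (mul s)"
      using bounded_bilinear.bounded_linear_right[OF bb]
      by (simp add: bounded_linear.linear linear_injective_0)
    then show "s \<in> alg_units mul one" using A by (simp add: alg_units_if_inj_mul)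
  qed
qed

lemma alg_inv_eqI:
  assumes A: "is_algebra mul one" and "mul s t = one" and "mul t s = one"
  shows "alg_inv mul one s = t"
  unfolding alg_inv_def
proof (rule the_equality)
  show "mul s t = one \<and> mul t s = one" using assms by simp
  fix t' assume t': "mul s t' = one \<and> mul t' s = one"
  have assoc: "\<And>a b c. mul (mul a b) c = mul a (mul b c)"
    and unit: "\<And>a. mul one a = a" "\<And>a. mul a one = a"
    using A unfolding is_algebra_def by auto
  have "t' = mul t' (mul s t)" using assms unit by simp
  also have "\<dots> = mul (mul t' s) t" using assoc by simp
  also have "\<dots> = t" using t' unit by simp
  finally show "t' = t" .
qed

lemma alg_hom_alg_inv:
  assumes A1: "is_algebra mul1 one1" and A2: "is_algebra mul2 one2"
    and k: "alg_hom mul1 one1 mul2 one2 k" and s: "s \<in> alg_units mul1 one1"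
  shows "k (alg_inv mul1 one1 s) = alg_inv mul2 one2 (k s)"
proof -
  obtain t where t: "mul1 s t = one1" "mul1 t s = one1"
    using s unfolding alg_units_def by blast
  have "alg_inv mul2 one2 (k s) = k t"
    using k t unfolding alg_hom_def by (intro alg_inv_eqI[OF A2]) metis+
  then show ?thesis using alg_inv_eqI[OF A1 t] by simp
qed

lemma matrix_works_real:
  fixes f :: "real^'n \<Rightarrow> real^'m"
  shows "linear f \<Longrightarrow> matrix f *v x = f x"
  by (simp add: matrix_works linear_matrix_vector_mul_eq)

definition pullback_metric :: "(real^'n \<Rightarrow> real^'m) \<Rightarrow> real^'m^'m \<Rightarrow> real^'n^'n" where
  "pullback_metric k L = transpose (matrix k) ** L ** matrix k"

lemma linear_pullback_metric: "linear (pullback_metric k)"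
  unfolding pullback_metric_def
  by (rule linearI)
    (simp_all add: matrix_matrix_mult_def vec_eq_iff sum.distrib algebra_simps sum_distrib_left)

lemma transpose_pullback_metric:
  "transpose L = L \<Longrightarrow> transpose (pullback_metric k L) = pullback_metric k L"
  unfolding pullback_metric_def by (simp add: matrix_transpose_mul matrix_mul_assoc)

lemma inner_pullback_metric:
  assumes "linear k"
  shows "x \<bullet> (pullback_metric k L *v y) = k x \<bullet> (L *v k y)"
proof -
  have "x \<bullet> (pullback_metric k L *v y) = x \<bullet> (transpose (matrix k) *v (L *v (matrix k *v y)))"
    unfolding pullback_metric_def by (simp add: matrix_vector_mul_assoc matrix_mul_assoc)
  also have "\<dots> = (matrix k *v x) \<bullet> (L *v (matrix k *v y))"
    by (metis dot_lmul_matrix vector_transpose_matrix)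
  finally show ?thesis using assms by (simp add: matrix_works_real)
qed

lemma vector_matrix_mult_pullback_metric:
  assumes "linear k"
  shows "x v* pullback_metric k L = (k x v* L) v* matrix k"
proof -
  have "x v* pullback_metric k L = ((x v* transpose (matrix k)) v* L) v* matrix k"
    unfolding pullback_metric_def by (simp only: vector_matrix_mul_assoc)
  then show ?thesis by (simp only: vector_transpose_matrix matrix_works_real[OF assms])
qed

lemma inj_pullback_metric:
  assumes "linear k" and "surj k"
  shows "inj (pullback_metric k)"
  unfolding linear_injective_0[OF linear_pullback_metric]
proof (intro allI impI)
  fix L assume L: "pullback_metric k L = 0"
  have "u \<bullet> (L *v v) = 0" for u v
  proof -
    obtain x y where "u = k x" and "v = k y" using \<open>surj k\<close> by (metis surjD)
    then show ?thesis using inner_pullback_metric[OF \<open>linear k\<close>, of x L y] L by simp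
  qed
  then have "\<And>v. L *v v = 0" by (metis inner_eq_zero_iff)
  then show "L = 0" by (simp add: matrix_eq)
qed

lemma inner_commute_if_axis_symmetric:
  fixes F :: "real^'n \<Rightarrow> real^'n"
  assumes lin: "linear F" and sym: "\<forall>i j. F (axis j 1) $ i = F (axis i 1) $ j"
  shows "F v \<bullet> u = F u \<bullet> v"
proof -
  have symm: "transpose (matrix F) = matrix F"
    unfolding matrix_def transpose_def using sym by (simp add: vec_eq_iff)
  have "F v \<bullet> u = (matrix F *v v) \<bullet> u" using lin by (simp add: matrix_works_real)
  also have "\<dots> = v \<bullet> (transpose (matrix F) *v u)"
    by (metis dot_lmul_matrix vector_transpose_matrix)
  also have "\<dots> = F u \<bullet> v" using lin symm by (simp add: matrix_works_real inner_commute)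
  finally show ?thesis .
qed

lemma axis_symmetric_pullback:
  fixes F :: "real^'m \<Rightarrow> real^'m" and k :: "real^'n \<Rightarrow> real^'m"
  assumes "linear F" and "linear k" and "\<forall>i j. F (axis j 1) $ i = F (axis i 1) $ j"
  shows "(F (k (axis j 1)) v* matrix k) $ i = (F (k (axis i 1)) v* matrix k) $ j"
proof -
  have "\<And>w i. (w v* matrix k) $ i = w \<bullet> k (axis i 1)"
    using \<open>linear k\<close> by (metis cart_eq_inner_axis dot_lmul_matrix matrix_works_real)
  then show ?thesis using inner_commute_if_axis_symmetric[OF assms(1,3)] by simp
qed

lemma uncurling_metric_pullback:
  fixes mul1 :: "real^'n \<Rightarrow> real^'n \<Rightarrow> real^'n" and mul2 :: "real^'m \<Rightarrow> real^'m \<Rightarrow> real^'m"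
  assumes A1: "is_algebra mul1 one1" and A2: "is_algebra mul2 one2"
    and k: "alg_hom mul1 one1 mul2 one2 k"
    and L: "uncurling_metric mul2 one2 L"
  shows "uncurling_metric mul1 one1 (pullback_metric k L)"
proof -
  have lin: "linear k" and k1: "k one1 = one2" using k unfolding alg_hom_def by simp_all
  obtain r2 where "r2 > 0" and r2: "\<forall>s\<in>ball one2 r2. \<exists>f'.
      ((\<lambda>x. alg_inv mul2 one2 x v* L) has_derivative f') (at s) \<and>
      (\<forall>i j. f' (axis j 1) $ i = f' (axis i 1) $ j)"
    using L unfolding uncurling_metric_def by blast
  obtain r0 where "r0 > 0" and r0: "ball one1 r0 \<subseteq> alg_units mul1 one1"
    using alg_units_nhd[OF A1] by blast
  have "isCont k one1" using lin by (simp add: linear_continuous_at linear_conv_bounded_linear)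
  then obtain d where "d > 0" and d: "k ` ball one1 d \<subseteq> ball one2 r2"
    using \<open>r2 > 0\<close> unfolding continuous_at_ball k1 by blast
  define r where "r = min r0 d"
  have form: "(alg_inv mul2 one2 (k x) v* L) v* matrix k = alg_inv mul1 one1 x v* pullback_metric k L"
    if "x \<in> ball one1 r" for x
    using that r0 alg_hom_alg_inv[OF A1 A2 k] lin
    by (auto simp: r_def vector_matrix_mult_pullback_metric)
  have "\<exists>f'. ((\<lambda>x. alg_inv mul1 one1 x v* pullback_metric k L) has_derivative f') (at s) \<and>
      (\<forall>i j. f' (axis j 1) $ i = f' (axis i 1) $ j)" if s: "s \<in> ball one1 r" for s
  proof -
    have "s \<in> ball one1 d" using s by (simp add: r_def)
    then have "k s \<in> ball one2 r2" using d by blast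
    then obtain f' where f': "((\<lambda>x. alg_inv mul2 one2 x v* L) has_derivative f') (at (k s))"
      "\<forall>i j. f' (axis j 1) $ i = f' (axis i 1) $ j"
      using r2 by blast
    have "(k has_derivative k) (at s)"
      using lin by (simp add: bounded_linear_imp_has_derivative linear_conv_bounded_linear)
    from diff_chain_at[OF this f'(1)]
    have inner: "((\<lambda>x. alg_inv mul2 one2 (k x) v* L) has_derivative (\<lambda>h. f' (k h))) (at s)"
      by (simp add: o_def)
    have "bounded_linear (\<lambda>y. y v* matrix k)"
      by (simp add: linear_conv_bounded_linear[symmetric] flip: transpose_matrix_vector)
    from diff_chain_at[OF inner bounded_linear_imp_has_derivative[OF this]]
    have "((\<lambda>x. (alg_inv mul2 one2 (k x) v* L) v* matrix k)
        has_derivative (\<lambda>h. f' (k h) v* matrix k)) (at s)"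
      by (simp add: o_def)
    then have "((\<lambda>x. alg_inv mul1 one1 x v* pullback_metric k L)
        has_derivative (\<lambda>h. f' (k h) v* matrix k)) (at s)"
      by (rule has_derivative_transform_within_open[OF _ open_ball s]) (rule form)
    moreover have "linear f'" using f'(1) by (rule has_derivative_linear)
    ultimately show ?thesis
      using axis_symmetric_pullback[OF _ lin f'(2)] by blast
  qed
  moreover have "transpose L = L" using L unfolding uncurling_metric_def by simp
  moreover have "r > 0" using \<open>r0 > 0\<close> \<open>d > 0\<close> by (simp add: r_def)
  moreover have "ball one1 r \<subseteq> alg_units mul1 one1" using r0 by (auto simp: r_def)
  ultimately show ?thesis
    unfolding uncurling_metric_def by (auto simp: transpose_pullback_metric)
qed

theorem corollary6p2:
  fixes mul1 :: "real^'n \<Rightarrow> real^'n \<Rightarrow> real^'n" and one1 :: "real^'n"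
    and mul2 :: "real^'m \<Rightarrow> real^'m \<Rightarrow> real^'m" and one2 :: "real^'m"
    and k :: "real^'n \<Rightarrow> real^'m"
  assumes "is_algebra mul1 one1" and "is_algebra mul2 one2"
    and "alg_hom mul1 one1 mul2 one2 k" and "surj k"
  shows "dim (anti_rotor mul2 one2) \<le> dim (anti_rotor mul1 one1)"
proof -
  have "linear k" using assms(3) unfolding alg_hom_def by simp
  then have "inj (pullback_metric k)" using assms(4) by (rule inj_pullback_metric)
  then have "dim (anti_rotor mul2 one2) = dim (pullback_metric k ` anti_rotor mul2 one2)"
    using dim_image_eq[OF linear_pullback_metric] by (metis inj_on_subset subset_UNIV)
  also have "\<dots> \<le> dim (anti_rotor mul1 one1)"
    using uncurling_metric_pullback[OF assms(1-3)]
    by (intro dim_subset) (auto simp: anti_rotor_def)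
  finally show ?thesis .
qed

end
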